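(* Let $\mathcal{M}=(M_\sigma)$ be a linkage $(n,d)$-tope field of type $v=(v_1,\dots,v_d)$ and thickness $k<n$, let $\tau\subseteq L$ be a $(k+1)$-subset and let $C$ be the linkage covector on $\tau\sqcup R$. Then for each $r_i\in R$ there are exactly $v_i+1$ nodes adjacent to $r_i$ in $C$. Furthermore, for each $\ell_j\in\tau$, $C$ contains the tope $M_{\tau\setminus\{\ell_j\}}$ of the tope field, and it is the unique subgraph of $C$ which is a tope with right degree vector $v$ in which $\ell_j$ is isolated (i.e. with left degree vector $\mathbf{1}_{\tau\setminus\{\ell_j\}}$).
   Context: $L=\{\ell_1,\dots,\ell_n\}$, $R=\{r_1,\dots,r_d\}$; graphs are bipartite on $L\sqcup R$, identified with edge sets. For $v\in\mathbb{Z}_{>0}^d$ with $k=\sum v_i\le n$ and a $k$-subset $\sigma\subseteq L$, a tope of type $v$ on $\sigma$ is a graph whose left degree vector is the indicator vector $\mathbf{1}_\sigma$ and whose right degree vector is $v$. An $(n,d)$-tope field of type $v$ (thickness $k$) is a family $(M_\sigma)$ with one tope $M_\sigma$ of type $v$ on $\sigma$ for each $k$-subset $\sigma\subseteq L$. It is linkage if for every $(k+1)$-subset $\tau\subseteq L$, the union $C_\tau$ of the topes $M_\sigma$, $\sigma\subset\tau$, is a tree on the node set $\tau\sqcup R$; $C_\tau$ is called the linkage covector on $\tau$. *)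

theory Defs
  imports Main
begin

text \<open>Conventions: left nodes l_j are indexed by j in {0..<n}, right nodes r_i by
  i in {0..<d}. A bipartite graph on L + R is identified with its edge set,
  a set of pairs (j, i) meaning the edge l_j -- r_i. As abstract vertices we use
  Inl j for l_j and Inr i for r_i.\<close>

type_synonym bgraph = "(nat \<times> nat) set"

definition ldeg :: "bgraph \<Rightarrow> nat \<Rightarrow> nat" where
  "ldeg G j = card {i. (j, i) \<in> G}"

definition rdeg :: "bgraph \<Rightarrow> nat \<Rightarrow> nat" where
  "rdeg G i = card {j. (j, i) \<in> G}"

definition is_bgraph :: "nat \<Rightarrow> nat \<Rightarrow> bgraph \<Rightarrow> bool" where
  "is_bgraph n d G \<longleftrightarrow> G \<subseteq> {0..<n} \<times> {0..<d}"

definition is_tope :: "nat \<Rightarrow> nat \<Rightarrow> (nat \<Rightarrow> nat) \<Rightarrow> nat set \<Rightarrow> bgraph \<Rightarrow> bool" where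
  "is_tope n d v \<sigma> G \<longleftrightarrow> is_bgraph n d G
     \<and> (\<forall>j<n. ldeg G j = (if j \<in> \<sigma> then 1 else 0))
     \<and> (\<forall>i<d. rdeg G i = v i)"

text \<open>(n,d)-tope field of type v and thickness k = sum of v.\<close>
definition is_tope_field :: "nat \<Rightarrow> nat \<Rightarrow> (nat \<Rightarrow> nat) \<Rightarrow> (nat set \<Rightarrow> bgraph) \<Rightarrow> bool" where
  "is_tope_field n d v M \<longleftrightarrow>
     (\<forall>i<d. v i > 0) \<and> (\<Sum>i<d. v i) \<le> n \<and>
     (\<forall>\<sigma>. \<sigma> \<subseteq> {0..<n} \<and> card \<sigma> = (\<Sum>i<d. v i) \<longrightarrow> is_tope n d v \<sigma> (M \<sigma>))"

definition badj :: "bgraph \<Rightarrow> nat + nat \<Rightarrow> nat + nat \<Rightarrow> bool" where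
  "badj G x y \<longleftrightarrow> (\<exists>j i. (j, i) \<in> G \<and>
      ((x = Inl j \<and> y = Inr i) \<or> (x = Inr i \<and> y = Inl j)))"

definition has_cycle :: "bgraph \<Rightarrow> bool" where
  "has_cycle G \<longleftrightarrow> (\<exists>xs. length xs \<ge> 3 \<and> distinct xs
      \<and> (\<forall>t < length xs. badj G (xs ! t) (xs ! ((t + 1) mod length xs))))"

definition is_tree_on :: "(nat + nat) set \<Rightarrow> bgraph \<Rightarrow> bool" where
  "is_tree_on V G \<longleftrightarrow> V \<noteq> {}
     \<and> (\<forall>j i. (j, i) \<in> G \<longrightarrow> Inl j \<in> V \<and> Inr i \<in> V)
     \<and> (\<forall>x\<in>V. \<forall>y\<in>V. (x, y) \<in> {(a, b). badj G a b}\<^sup>*)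
     \<and> \<not> has_cycle G"

definition linkage_covector :: "nat \<Rightarrow> (nat set \<Rightarrow> bgraph) \<Rightarrow> nat set \<Rightarrow> bgraph" where
  "linkage_covector k M \<tau> = (\<Union>\<sigma>\<in>{\<sigma>. \<sigma> \<subseteq> \<tau> \<and> card \<sigma> = k}. M \<sigma>)"

definition is_linkage_tope_field :: "nat \<Rightarrow> nat \<Rightarrow> (nat \<Rightarrow> nat) \<Rightarrow> (nat set \<Rightarrow> bgraph) \<Rightarrow> bool" where
  "is_linkage_tope_field n d v M \<longleftrightarrow> is_tope_field n d v M \<and>
     (\<forall>\<tau>. \<tau> \<subseteq> {0..<n} \<and> card \<tau> = (\<Sum>i<d. v i) + 1 \<longrightarrow>
        is_tree_on (Inl ` \<tau> \<union> Inr ` {0..<d}) (linkage_covector (\<Sum>i<d. v i) M \<tau>))"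

end

theory Submission
  imports Defs
begin

text \<open>A forest has fewer edges than vertices. Every tope on \<tau> - {j} is the graph of a
  function \<tau> - {j} \<rightarrow> R with fibre sizes v; two such functions differing on a set D
  would give 2|D| edges on at most 2|D| vertices inside the tree C, so the tope in C is
  unique. For the degrees, an edge (l, r_i) of some tope together with M (\<tau> - {l}),
  which avoids l, gives at least v_i + 1 neighbours of r_i; these lower bounds already
  sum to |\<tau>| + d - 1, the number of edges of a tree on \<tau> + R, so they are attained.\<close>

lemma badj_sym: "badj G x y \<longleftrightarrow> badj G y x"
  unfolding badj_def by blast

lemma badj_irrefl: "\<not> badj G x x"
  unfolding badj_def by auto

lemma badj_Inl_Inr [simp]: "badj G (Inl j) (Inr i) \<longleftrightarrow> (j, i) \<in> G"
  and badj_Inr_Inl [simp]: "badj G (Inr i) (Inl j) \<longleftrightarrow> (j, i) \<in> G"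
  unfolding badj_def by auto

lemma has_cycle_mono: "has_cycle G \<Longrightarrow> G \<subseteq> G' \<Longrightarrow> has_cycle G'"
  unfolding has_cycle_def badj_def by blast

definition bvertices :: "bgraph \<Rightarrow> (nat + nat) set" where
  "bvertices G = Inl ` fst ` G \<union> Inr ` snd ` G"

lemma badj_bvertices: "badj G x y \<Longrightarrow> x \<in> bvertices G"
  unfolding badj_def bvertices_def by force

definition is_bpath :: "bgraph \<Rightarrow> (nat + nat) list \<Rightarrow> bool" where
  "is_bpath G xs \<longleftrightarrow> distinct xs \<and> 2 \<le> length xs \<and>
     (\<forall>t. Suc t < length xs \<longrightarrow> badj G (xs ! t) (xs ! Suc t))"

lemma set_bpath_subset:
  assumes "is_bpath G xs"
  shows "set xs \<subseteq> bvertices G"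
proof
  fix x assume "x \<in> set xs"
  then obtain t where t: "t < length xs" "xs ! t = x" by (auto simp: in_set_conv_nth)
  show "x \<in> bvertices G"
  proof (cases "Suc t < length xs")
    case True
    then show ?thesis using assms t badj_bvertices unfolding is_bpath_def by blast
  next
    case False
    with t assms have "Suc (t - 1) < length xs" "Suc (t - 1) = t"
      unfolding is_bpath_def by auto
    then have "badj G (xs ! t) (xs ! (t - 1))"
      using assms badj_sym unfolding is_bpath_def by metis
    then show ?thesis using t badj_bvertices by blast
  qed
qed

lemma ex_maximal_bpath:
  assumes "finite G" "G \<noteq> {}"
  shows "\<exists>xs. is_bpath G xs \<and> (\<forall>ys. is_bpath G ys \<longrightarrow> length ys \<le> length xs)"
proof -
  obtain j i where "(j, i) \<in> G" using assms(2) by auto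
  then have edge: "is_bpath G [Inl j, Inr i]"
    unfolding is_bpath_def by (auto simp: less_Suc_eq)
  have "length ys < Suc (card (bvertices G))" if "is_bpath G ys" for ys
  proof -
    have "finite (bvertices G)" using assms(1) unfolding bvertices_def by simp
    then have "card (set ys) \<le> card (bvertices G)"
      using set_bpath_subset[OF that] card_mono by blast
    then show ?thesis using that distinct_card unfolding is_bpath_def by fastforce
  qed
  then show ?thesis using ex_has_greatest_nat[of "is_bpath G", OF edge] by blast
qed

lemma bpath_Cons:
  "is_bpath G xs \<Longrightarrow> y \<notin> set xs \<Longrightarrow> badj G y (xs ! 0) \<Longrightarrow> is_bpath G (y # xs)"
  unfolding is_bpath_def by (auto simp: nth_Cons split: nat.split)

lemma has_cycle_if_bpath_closes:
  assumes "is_bpath G xs" "2 \<le> t" "t < length xs" "badj G (xs ! 0) (xs ! t)"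
  shows "has_cycle G"
  unfolding has_cycle_def
proof (intro exI[of _ "take (Suc t) xs"] conjI allI impI)
  show "3 \<le> length (take (Suc t) xs)" "distinct (take (Suc t) xs)"
    using assms unfolding is_bpath_def by auto
  fix s assume s: "s < length (take (Suc t) xs)"
  show "badj G (take (Suc t) xs ! s) (take (Suc t) xs ! ((s + 1) mod length (take (Suc t) xs)))"
  proof (cases "s = t")
    case True
    then show ?thesis using assms(3,4) badj_sym by simp
  next
    case False
    with s assms(1,3) show ?thesis unfolding is_bpath_def by auto
  qed
qed

text \<open>In an acyclic graph the first vertex of a longest path is a leaf: a further
  neighbour would either extend the path or close a cycle.\<close>
lemma maximal_bpath_start_leaf:
  assumes "\<not> has_cycle G" "is_bpath G xs"
    and maximal: "\<And>ys. is_bpath G ys \<Longrightarrow> length ys \<le> length xs"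
    and "badj G (xs ! 0) y"
  shows "y = xs ! 1"
proof (cases "y \<in> set xs")
  case False
  then have "is_bpath G (y # xs)" using assms(2,4) badj_sym bpath_Cons by metis
  then show ?thesis using maximal by fastforce
next
  case True
  then obtain t where t: "t < length xs" "xs ! t = y" by (auto simp: in_set_conv_nth)
  moreover have "t \<noteq> 0" using t assms(4) badj_irrefl by metis
  moreover have "\<not> 2 \<le> t" using has_cycle_if_bpath_closes assms t by metis
  ultimately show ?thesis by (metis One_nat_def less_2_cases not_le)
qed

lemma acyclic_has_leaf:
  assumes "finite G" "G \<noteq> {}" "\<not> has_cycle G"
  shows "\<exists>x y. badj G x y \<and> (\<forall>z. badj G x z \<longrightarrow> z = y)"
proof -
  obtain xs where xs: "is_bpath G xs" "\<forall>ys. is_bpath G ys \<longrightarrow> length ys \<le> length xs"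
    using ex_maximal_bpath[OF assms(1,2)] by blast
  then have "badj G (xs ! 0) (xs ! 1)" unfolding is_bpath_def by fastforce
  then show ?thesis using maximal_bpath_start_leaf[OF assms(3) xs(1)] xs(2) by blast
qed

lemma card_less_card_vertices_if_acyclic:
  assumes "finite V" "V \<noteq> {}" "\<And>j i. (j, i) \<in> G \<Longrightarrow> Inl j \<in> V \<and> Inr i \<in> V"
    and "\<not> has_cycle G"
  shows "card G < card V"
  using assms
proof (induction V arbitrary: G rule: finite_psubset_induct)
  case (psubset V)
  have "G \<subseteq> Inl -` V \<times> Inr -` V" using psubset.prems(2) by auto
  moreover have "finite (Inl -` V \<times> Inr -` V)"
    using psubset.hyps(1) by (simp add: finite_vimageI)
  ultimately have fin: "finite G" by (rule finite_subset)
  show ?case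
  proof (cases "G = {}")
    case True
    then show ?thesis using psubset.hyps(1) psubset.prems(1) by (simp add: card_gt_0_iff)
  next
    case False
    then obtain x y where "badj G x y" and leaf: "\<And>z. badj G x z \<Longrightarrow> z = y"
      using acyclic_has_leaf[OF fin _ psubset.prems(3)] by blast
    then obtain j i where e: "(j, i) \<in> G" "x = Inl j \<and> y = Inr i \<or> x = Inr i \<and> y = Inl j"
      unfolding badj_def by blast
    have x: "x \<in> V" and "y \<in> V" "x \<noteq> y" using e psubset.prems(2) by auto
    have avoid: "Inl j' \<in> V - {x} \<and> Inr i' \<in> V - {x}" if "(j', i') \<in> G - {(j, i)}" for j' i'
      using that e leaf[of "Inr i'"] leaf[of "Inl j'"] psubset.prems(2) by auto
    have "card (G - {(j, i)}) < card (V - {x})"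
    proof (rule psubset.IH)
      show "V - {x} \<subset> V" "V - {x} \<noteq> {}" using x \<open>y \<in> V\<close> \<open>x \<noteq> y\<close> by auto
      show "\<not> has_cycle (G - {(j, i)})" using psubset.prems(3) has_cycle_mono by blast
    qed (use avoid in blast)
    then show ?thesis using fin e(1) x psubset.hyps(1) by (simp add: card_Diff_singleton)
  qed
qed

definition fun_graph :: "nat set \<Rightarrow> (nat \<Rightarrow> nat) \<Rightarrow> bgraph" where
  "fun_graph \<sigma> g = (\<lambda>l. (l, g l)) ` \<sigma>"

lemma rdeg_fun_graph: "rdeg (fun_graph \<sigma> g) i = card {l\<in>\<sigma>. g l = i}"
  unfolding rdeg_def fun_graph_def by (rule arg_cong[where f = card]) auto

lemma eq_if_fun_graphs_acyclic:
  assumes "finite \<sigma>"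
    and fibres: "\<And>r. card {l\<in>\<sigma>. g l = r} = card {l\<in>\<sigma>. m l = r}"
    and acyclic: "\<not> has_cycle (fun_graph \<sigma> g \<union> fun_graph \<sigma> m)"
  shows "\<forall>l\<in>\<sigma>. g l = m l"
proof (rule ccontr)
  define D where "D = {l\<in>\<sigma>. g l \<noteq> m l}"
  assume "\<not> (\<forall>l\<in>\<sigma>. g l = m l)"
  then have "D \<noteq> {}" unfolding D_def by auto
  have fin: "finite D" using assms(1) unfolding D_def by auto
  have fibres_D: "card {l\<in>D. g l = r} = card {l\<in>D. m l = r}" for r
  proof -
    let ?rest = "{l\<in>\<sigma>-D. m l = r}"
    have "{l\<in>\<sigma>. g l = r} = {l\<in>D. g l = r} \<union> ?rest"
      and "{l\<in>\<sigma>. m l = r} = {l\<in>D. m l = r} \<union> ?rest"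
      unfolding D_def by auto
    moreover have "finite ?rest" using assms(1) by simp
    ultimately show ?thesis
      using fibres[of r] fin by (simp add: card_Un_disjoint disjoint_iff)
  qed
  have "m ` D \<subseteq> g ` D"
  proof
    fix r assume "r \<in> m ` D"
    then have "card {l\<in>D. m l = r} \<noteq> 0" using fin by auto
    then have "{l\<in>D. g l = r} \<noteq> {}" using fibres_D[of r] by force
    then show "r \<in> g ` D" by blast
  qed
  define H where "H = fun_graph D g \<union> fun_graph D m"
  have "card (Inl ` D \<union> Inr ` g ` D) \<le> card D + card (g ` D)"
    using card_Un_le[of "Inl ` D" "Inr ` g ` D"]
    by (simp only: card_image[OF inj_Inl] card_image[OF inj_Inr])
  also have "\<dots> \<le> card D + card D"
    using card_image_le[OF fin, of g] by (rule add_left_mono)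
  also have "\<dots> = card H"
  proof -
    have "fun_graph D g \<inter> fun_graph D m = {}"
      unfolding D_def fun_graph_def by auto
    then show ?thesis
      unfolding H_def fun_graph_def using fin
      by (simp add: card_Un_disjoint card_image inj_on_def)
  qed
  finally have "card (Inl ` D \<union> Inr ` g ` D) \<le> card H" .
  moreover have "card H < card (Inl ` D \<union> Inr ` g ` D)"
  proof (rule card_less_card_vertices_if_acyclic)
    have "H \<subseteq> fun_graph \<sigma> g \<union> fun_graph \<sigma> m"
      unfolding H_def D_def fun_graph_def by auto
    then show "\<not> has_cycle H" using acyclic has_cycle_mono by blast
    show "finite (Inl ` D \<union> Inr ` g ` D)" "Inl ` D \<union> Inr ` g ` D \<noteq> {}"
      using fin \<open>D \<noteq> {}\<close> by auto
    show "Inl j \<in> Inl ` D \<union> Inr ` g ` D \<and> Inr i \<in> Inl ` D \<union> Inr ` g ` D" if "(j, i) \<in> H" for j i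
      using that \<open>m ` D \<subseteq> g ` D\<close> unfolding H_def fun_graph_def by blast
  qed
  ultimately show False by simp
qed

lemma tope_edge:
  assumes tope: "is_tope n d v \<sigma> G" and edge: "(j, i) \<in> G"
  shows "j \<in> \<sigma> \<and> i < d"
proof -
  have bgraph: "G \<subseteq> {0..<n} \<times> {0..<d}" using tope unfolding is_tope_def is_bgraph_def by simp
  then have "j < n" "i < d" using edge by auto
  have "finite {i. (j, i) \<in> G}" using bgraph by (auto intro: finite_subset[of _ "{0..<d}"])
  then have "ldeg G j \<noteq> 0" using edge unfolding ldeg_def by auto
  then show ?thesis
    using tope \<open>j < n\<close> \<open>i < d\<close> unfolding is_tope_def by (auto split: if_splits)
qed

lemma rdeg_tope:
  assumes "is_tope n d v \<sigma> G"
  shows "rdeg G i = (if i < d then v i else 0)"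
proof (cases "i < d")
  case False
  then have "{j. (j, i) \<in> G} = {}" using tope_edge[OF assms] by auto
  then show ?thesis using False unfolding rdeg_def by simp
qed (use assms in \<open>simp add: is_tope_def\<close>)

lemma tope_is_fun_graph:
  assumes tope: "is_tope n d v \<sigma> G" and "\<sigma> \<subseteq> {0..<n}"
  shows "\<exists>g. G = fun_graph \<sigma> g"
proof -
  have "\<exists>i. {i. (l, i) \<in> G} = {i}" if "l \<in> \<sigma>" for l
  proof -
    have "ldeg G l = 1" using tope that assms(2) unfolding is_tope_def by auto
    then show ?thesis unfolding ldeg_def by (simp add: card_1_singleton_iff)
  qed
  then obtain g where g: "\<And>l. l \<in> \<sigma> \<Longrightarrow> {i. (l, i) \<in> G} = {g l}" by metis
  have "G = fun_graph \<sigma> g"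
    unfolding fun_graph_def using g tope_edge[OF tope] by fastforce
  then show ?thesis by blast
qed

lemma tope_unique_if_acyclic:
  assumes "is_tope n d v \<sigma> G" "is_tope n d v \<sigma> G'" "\<sigma> \<subseteq> {0..<n}"
    and "\<not> has_cycle (G \<union> G')"
  shows "G = G'"
proof -
  obtain g m where G: "G = fun_graph \<sigma> g" and G': "G' = fun_graph \<sigma> m"
    using tope_is_fun_graph assms(1-3) by metis
  have "card {l\<in>\<sigma>. g l = r} = card {l\<in>\<sigma>. m l = r}" for r
    using rdeg_tope[OF assms(1)] rdeg_tope[OF assms(2)] by (simp add: G G' rdeg_fun_graph)
  then have "\<forall>l\<in>\<sigma>. g l = m l"
    using eq_if_fun_graphs_acyclic assms(3,4) finite_subset G G' by blast
  then show ?thesis unfolding G G' fun_graph_def by auto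
qed

lemma rdeg_less_if_missing_edge:
  assumes "finite {j. (j, i) \<in> C}" "T \<subseteq> C" "(l, i) \<in> C" "(l, i) \<notin> T"
  shows "rdeg T i < rdeg C i"
  unfolding rdeg_def using assms by (intro psubset_card_mono) auto

lemma card_eq_sum_rdeg:
  assumes "finite G" "G \<subseteq> UNIV \<times> {..<d}"
  shows "card G = (\<Sum>i<d. rdeg G i)"
proof -
  define F where "F i = (\<lambda>j. (j, i)) ` {j. (j, i) \<in> G}" for i
  have "{j. (j, i) \<in> G} \<subseteq> fst ` G" for i by force
  then have fin: "finite {j. (j, i) \<in> G}" for i
    using assms(1) finite_subset by blast
  have "G = (\<Union>i<d. F i)" using assms(2) unfolding F_def by auto
  also have "card \<dots> = (\<Sum>i<d. card (F i))"
    by (rule card_UN_disjoint) (auto simp: F_def fin)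
  finally show ?thesis unfolding F_def rdeg_def by (simp add: card_image inj_on_def)
qed

lemma linkage_covector_subset:
  assumes "is_tope_field n d v M" "\<tau> \<subseteq> {0..<n}"
  shows "linkage_covector (\<Sum>i<d. v i) M \<tau> \<subseteq> \<tau> \<times> {..<d}"
proof
  fix e assume "e \<in> linkage_covector (\<Sum>i<d. v i) M \<tau>"
  then obtain \<sigma> where "\<sigma> \<subseteq> \<tau>" "card \<sigma> = (\<Sum>i<d. v i)" "e \<in> M \<sigma>"
    unfolding linkage_covector_def by blast
  moreover from this have "is_tope n d v \<sigma> (M \<sigma>)"
    using assms unfolding is_tope_field_def by blast
  ultimately show "e \<in> \<tau> \<times> {..<d}" using tope_edge by (cases e) blast
qed

lemma linkage_covector_contains_tope:
  assumes "is_tope_field n d v M" "\<tau> \<subseteq> {0..<n}" "card \<tau> = (\<Sum>i<d. v i) + 1" "j \<in> \<tau>"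
  shows "is_tope n d v (\<tau> - {j}) (M (\<tau> - {j}))"
    and "M (\<tau> - {j}) \<subseteq> linkage_covector (\<Sum>i<d. v i) M \<tau>"
proof -
  have "card (\<tau> - {j}) = (\<Sum>i<d. v i)"
    using assms(2-4) finite_subset by fastforce
  moreover have "\<tau> - {j} \<subseteq> {0..<n}" using assms(2) by auto
  ultimately show "is_tope n d v (\<tau> - {j}) (M (\<tau> - {j}))"
    using assms(1) unfolding is_tope_field_def by blast
  show "M (\<tau> - {j}) \<subseteq> linkage_covector (\<Sum>i<d. v i) M \<tau>"
    unfolding linkage_covector_def using \<open>card (\<tau> - {j}) = (\<Sum>i<d. v i)\<close> by blast
qed

lemma rdeg_linkage_covector_gt:
  assumes field: "is_tope_field n d v M" and \<tau>: "\<tau> \<subseteq> {0..<n}" "card \<tau> = (\<Sum>i<d. v i) + 1"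
    and "i < d"
  shows "v i < rdeg (linkage_covector (\<Sum>i<d. v i) M \<tau>) i"
proof -
  let ?C = "linkage_covector (\<Sum>i<d. v i) M \<tau>"
  have "\<tau> \<noteq> {}" using \<tau>(2) by auto
  then obtain j where j: "j \<in> \<tau>" by blast
  note tope_j = linkage_covector_contains_tope[OF field \<tau> j]
  have "rdeg (M (\<tau> - {j})) i \<noteq> 0"
    using field \<open>i < d\<close> rdeg_tope[OF tope_j(1)] unfolding is_tope_field_def by simp
  then have "{l. (l, i) \<in> M (\<tau> - {j})} \<noteq> {}" unfolding rdeg_def by (metis card.empty)
  then obtain l where l: "(l, i) \<in> M (\<tau> - {j})" by blast
  have "(l, i) \<in> ?C" using l tope_j(2) by blast
  have "l \<in> \<tau>" using tope_edge[OF tope_j(1) l] by blast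
  note tope_l = linkage_covector_contains_tope[OF field \<tau> this]
  have "{j. (j, i) \<in> ?C} \<subseteq> \<tau>"
    using linkage_covector_subset[OF field \<tau>(1)] by blast
  then have fin: "finite {j. (j, i) \<in> ?C}"
    using \<tau>(1) finite_subset[OF _ finite_atLeastLessThan] by blast
  have "(l, i) \<notin> M (\<tau> - {l})" using tope_edge[OF tope_l(1)] by blast
  then have "rdeg (M (\<tau> - {l})) i < rdeg ?C i"
    by (rule rdeg_less_if_missing_edge[OF fin tope_l(2) \<open>(l, i) \<in> ?C\<close>])
  then show ?thesis using rdeg_tope[OF tope_l(1)] \<open>i < d\<close> by simp
qed

lemma rdeg_linkage_covector:
  assumes linkage: "is_linkage_tope_field n d v M"
    and \<tau>: "\<tau> \<subseteq> {0..<n}" "card \<tau> = (\<Sum>i<d. v i) + 1" and "i < d"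
  shows "rdeg (linkage_covector (\<Sum>i<d. v i) M \<tau>) i = v i + 1"
proof -
  let ?C = "linkage_covector (\<Sum>i<d. v i) M \<tau>"
  let ?V = "Inl ` \<tau> \<union> Inr ` {0..<d}"
  have field: "is_tope_field n d v M" and tree: "is_tree_on ?V ?C"
    using linkage \<tau> unfolding is_linkage_tope_field_def by auto
  have fin\<tau>: "finite \<tau>" using \<tau>(1) finite_subset by blast
  have gt: "v i' < rdeg ?C i'" if "i' < d" for i'
    using rdeg_linkage_covector_gt[OF field \<tau> that] .
  have sub: "?C \<subseteq> \<tau> \<times> {..<d}" by (rule linkage_covector_subset[OF field \<tau>(1)])
  then have "finite ?C" using fin\<tau> finite_subset by blast
  moreover have "?C \<subseteq> UNIV \<times> {..<d}" using sub by blast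
  ultimately have "(\<Sum>i<d. rdeg ?C i) = card ?C" by (simp add: card_eq_sum_rdeg)
  also have "card ?C < card ?V"
    using tree fin\<tau> unfolding is_tree_on_def
    by (intro card_less_card_vertices_if_acyclic) auto
  also have "card ?V = card \<tau> + d"
    using fin\<tau> by (subst card_Un_disjoint) (auto simp: card_image)
  also have "\<dots> = Suc (\<Sum>i<d. v i + 1)" using \<tau>(2) by (simp add: sum_Suc)
  finally have "(\<Sum>i<d. rdeg ?C i) \<le> (\<Sum>i<d. v i + 1)" by simp
  moreover have "(\<Sum>i<d. v i + 1) \<le> (\<Sum>i<d. rdeg ?C i)"
    using gt by (intro sum_mono) (simp add: Suc_le_eq)
  ultimately have "(\<Sum>i<d. v i + 1) = (\<Sum>i<d. rdeg ?C i)" by simp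
  then show ?thesis
    by (rule sum_mono_inv[symmetric]) (use gt \<open>i < d\<close> in \<open>auto simp: Suc_le_eq\<close>)
qed

theorem lemma3p10:
  fixes n d :: nat and v :: "nat \<Rightarrow> nat" and M :: "nat set \<Rightarrow> bgraph" and \<tau> :: "nat set"
  assumes "is_linkage_tope_field n d v M"
    and "(\<Sum>i<d. v i) < n"
    and "\<tau> \<subseteq> {0..<n}" and "card \<tau> = (\<Sum>i<d. v i) + 1"
  shows "(\<forall>i<d. card {j. badj (linkage_covector (\<Sum>i<d. v i) M \<tau>) (Inr i) (Inl j)} = v i + 1)
    \<and> (\<forall>j\<in>\<tau>. M (\<tau> - {j}) \<subseteq> linkage_covector (\<Sum>i<d. v i) M \<tau>
        \<and> (\<forall>G. G \<subseteq> linkage_covector (\<Sum>i<d. v i) M \<tau> \<and> is_tope n d v (\<tau> - {j}) G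
              \<longrightarrow> G = M (\<tau> - {j})))"
proof -
  let ?C = "linkage_covector (\<Sum>i<d. v i) M \<tau>"
  have field: "is_tope_field n d v M" and acyclic: "\<not> has_cycle ?C"
    using assms(1,3,4) unfolding is_linkage_tope_field_def is_tree_on_def by auto
  have "card {j. badj ?C (Inr i) (Inl j)} = v i + 1" if "i < d" for i
    using rdeg_linkage_covector[OF assms(1,3,4) that] unfolding rdeg_def by simp
  moreover have "G = M (\<tau> - {j})"
    if "j \<in> \<tau>" "G \<subseteq> ?C" "is_tope n d v (\<tau> - {j}) G" for j G
  proof (rule tope_unique_if_acyclic)
    note tope_j = linkage_covector_contains_tope[OF field assms(3,4) \<open>j \<in> \<tau>\<close>]
    show "is_tope n d v (\<tau> - {j}) (M (\<tau> - {j}))" by (rule tope_j(1))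
    show "\<not> has_cycle (G \<union> M (\<tau> - {j}))"
      using acyclic has_cycle_mono tope_j(2) \<open>G \<subseteq> ?C\<close> by (metis Un_least)
  qed (use that assms(3) in auto)
  ultimately show ?thesis
    using linkage_covector_contains_tope(2)[OF field assms(3,4)] by blast
qed

end
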